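(* For every integer $n\geq 2$, every $1\leq i\leq n-1$ and every integer $0\leq s < i/2$, we have $w_{i,s}' < w_{i,s}$.
   Context: In $\{0,1,2\}^n$ (ordered coordinatewise), $L_i$ is the set of vectors with coordinate sum $i$, $L_i^s$ the elements of $L_i$ with exactly $s$ coordinates equal to $2$, $L_i^{\geq s}=\bigcup_{r\geq s}L_i^r$, $L_i^{\leq s}=\bigcup_{r\leq s}L_i^r$. For such $i,s$: \[w_{i,s}=\frac{|L_i||L_{i+1}^{\geq s+1}| - |L_{i+1}||L_i^{\geq s+1}|}{|L_i^s||L_i||L_{i+1}|(i-2s)},\qquad w_{i,s}'=\frac{|L_i||L_{i+1}^{\leq s}| - |L_{i+1}||L_i^{\leq s-1}|}{|L_i^s||L_i||L_{i+1}|(n-i+s)}.\] *)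

theory Defs
  imports Complex_Main "HOL-Library.FuncSet"
begin

text \<open>Vectors of \<open>{0,1,2}^n\<close> are represented as functions \<open>nat \<Rightarrow> nat\<close>
  supported on \<open>{..<n}\<close> (extensional functions).\<close>

definition cube :: "nat \<Rightarrow> (nat \<Rightarrow> nat) set" where
  "cube n = PiE {..<n} (\<lambda>_. {0, 1, 2})"

definition twos :: "nat \<Rightarrow> (nat \<Rightarrow> nat) \<Rightarrow> nat" where
  "twos n x = card {j. j < n \<and> x j = 2}"

definition L :: "nat \<Rightarrow> nat \<Rightarrow> (nat \<Rightarrow> nat) set" where
  "L n i = {x \<in> cube n. (\<Sum>j<n. x j) = i}"

definition Ls :: "nat \<Rightarrow> nat \<Rightarrow> nat \<Rightarrow> (nat \<Rightarrow> nat) set" where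
  "Ls n i s = {x \<in> L n i. twos n x = s}"

definition Lge :: "nat \<Rightarrow> nat \<Rightarrow> int \<Rightarrow> (nat \<Rightarrow> nat) set" where
  "Lge n i s = {x \<in> L n i. int (twos n x) \<ge> s}"

text \<open>\<open>L_i^{\<le>s}\<close> (integer index, so that \<open>L_i^{\<le>-1}\<close> is empty)\<close>
definition Lle :: "nat \<Rightarrow> nat \<Rightarrow> int \<Rightarrow> (nat \<Rightarrow> nat) set" where
  "Lle n i s = {x \<in> L n i. int (twos n x) \<le> s}"

definition w :: "nat \<Rightarrow> nat \<Rightarrow> nat \<Rightarrow> real" where
  "w n i s =
     (real (card (L n i)) * real (card (Lge n (i+1) (int s + 1)))
       - real (card (L n (i+1))) * real (card (Lge n i (int s + 1))))
     / (real (card (Ls n i s)) * real (card (L n i)) * real (card (L n (i+1)))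
        * (real i - 2 * real s))"

definition w' :: "nat \<Rightarrow> nat \<Rightarrow> nat \<Rightarrow> real" where
  "w' n i s =
     (real (card (L n i)) * real (card (Lle n (i+1) (int s)))
       - real (card (L n (i+1))) * real (card (Lle n i (int s - 1))))
     / (real (card (Ls n i s)) * real (card (L n i)) * real (card (L n (i+1)))
        * (real n - real i + real s))"

end

theory Submission
  imports Defs
begin

text \<open>Write \<open>a r = |L_i^r|\<close> and \<open>b r = |L_{i+1}^r|\<close>, which are explicit products of binomial
  coefficients. Counting the ways to raise one coordinate gives the two relations
  \<open>a r (i - 2 r) = (r + 1) b (r + 1)\<close> and \<open>a r (n - i + r) = b r (i + 1 - 2 r)\<close>.
  After clearing denominators, \<open>w'_{i,s} < w_{i,s}\<close> says \<open>0 < psi s\<close>, where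
  \<open>psi k = (n - k) (|L_{i+1}| F k - |L_i| G k) - |L_{i+1}| a k (i - 2 k)\<close> and \<open>F\<close>, \<open>G\<close> are the partial
  sums of \<open>a\<close>, \<open>b\<close>. The relations turn this into a first-order recurrence for \<open>psi\<close> whose
  inhomogeneous term has the sign of a function \<open>Phi\<close> that changes sign at most once. Moreover
  \<open>psi\<close> vanishes at \<open>\<lceil>i/2\<rceil>\<close>, and \<open>psi 0 > 0\<close> reduces to \<open>n |L_i| < (i + 1) |L_{i+1}|\<close>, a
  Cauchy-Schwarz inequality for the moments of the common weight behind \<open>a\<close> and \<open>b\<close>.
  Propagating positivity upwards from \<open>0\<close> or downwards from \<open>\<lceil>i/2\<rceil>\<close>, according to the
  sign pattern of \<open>Phi\<close>, gives \<open>psi s > 0\<close>.\<close>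

lemma finite_cube: "finite (cube n)"
  unfolding cube_def by (intro finite_PiE) auto

lemma cube_coord: "x \<in> cube n \<Longrightarrow> j < n \<Longrightarrow> x j \<in> {0, 1, 2}"
  unfolding cube_def by (auto simp: PiE_iff)

lemma sum_cube_eq:
  assumes "x \<in> cube n"
  shows "(\<Sum>j<n. x j) = 2 * twos n x + card {j. j < n \<and> x j = 1}"
proof -
  have "(\<Sum>j<n. x j) = (\<Sum>j<n. 2 * of_bool (x j = 2) + of_bool (x j = 1))"
    by (rule sum.cong) (use cube_coord[OF assms] in fastforce)+
  also have "\<dots> = 2 * card ({..<n} \<inter> {j. x j = 2}) + card ({..<n} \<inter> {j. x j = 1})"
    by (simp add: sum.distrib sum_distrib_left[symmetric])
  finally show ?thesis
    unfolding twos_def by (simp add: Int_def)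
qed

lemma finite_L: "finite (L n k)"
  by (rule finite_subset[OF _ finite_cube[of n]]) (auto simp: L_def)

definition two_one_sets :: "nat \<Rightarrow> nat \<Rightarrow> nat \<Rightarrow> (nat set \<times> nat set) set" where
  "two_one_sets n k r =
     (SIGMA S:{S. S \<subseteq> {..<n} \<and> card S = r}. {U. U \<subseteq> {..<n} - S \<and> card U = k - 2 * r})"

lemma card_two_one_sets: "card (two_one_sets n k r) = (n choose r) * ((n - r) choose (k - 2 * r))"
proof -
  let ?R = "{S. S \<subseteq> {..<n} \<and> card S = r}"
  have "card (two_one_sets n k r) = (\<Sum>S\<in>?R. card {U. U \<subseteq> {..<n} - S \<and> card U = k - 2 * r})"
    unfolding two_one_sets_def by (rule card_SigmaI) (auto intro: finite_subset[of _ "Pow {..<n}"])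
  also have "\<dots> = (\<Sum>S\<in>?R. (n - r) choose (k - 2 * r))"
  proof (rule sum.cong[OF refl])
    fix S assume "S \<in> ?R"
    then have "card ({..<n} - S) = n - r" by (auto simp: card_Diff_subset finite_subset)
    then show "card {U. U \<subseteq> {..<n} - S \<and> card U = k - 2 * r} = (n - r) choose (k - 2 * r)"
      using n_subsets[of "{..<n} - S"] by simp
  qed
  also have "\<dots> = (n choose r) * ((n - r) choose (k - 2 * r))"
    using n_subsets[of "{..<n}" r] by simp
  finally show ?thesis .
qed

definition twos_ones :: "nat \<Rightarrow> (nat \<Rightarrow> nat) \<Rightarrow> nat set \<times> nat set" where
  "twos_ones n x = ({j. j < n \<and> x j = 2}, {j. j < n \<and> x j = 1})"

lemma bij_betw_Ls_two_one_sets: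
  assumes "2 * r \<le> k"
  shows "bij_betw (twos_ones n) (Ls n k r) (two_one_sets n k r)"
proof (rule bij_betw_imageI)
  show "inj_on (twos_ones n) (Ls n k r)"
  proof (rule inj_onI, rule ext)
    fix x y :: "nat \<Rightarrow> nat" and j
    assume x: "x \<in> Ls n k r" and y: "y \<in> Ls n k r" and eq: "twos_ones n x = twos_ones n y"
    have "x \<in> cube n" "y \<in> cube n" using x y by (auto simp: Ls_def L_def)
    then show "x j = y j"
    proof (cases "j < n")
      case True
      then have "x j = 2 \<longleftrightarrow> y j = 2" "x j = 1 \<longleftrightarrow> y j = 1"
        using eq by (auto simp: twos_ones_def set_eq_iff)
      moreover have "x j \<in> {0, 1, 2}" "y j \<in> {0, 1, 2}"
        using True \<open>x \<in> cube n\<close> \<open>y \<in> cube n\<close> by (auto dest: cube_coord)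
      ultimately show ?thesis by auto
    qed (auto simp: cube_def PiE_iff extensional_def)
  qed
next
  show "twos_ones n ` Ls n k r = two_one_sets n k r"
  proof (intro equalityI subsetI)
    fix p assume "p \<in> twos_ones n ` Ls n k r"
    then obtain x where x: "x \<in> Ls n k r" and p: "p = twos_ones n x"
      by auto
    then have "card {j. j < n \<and> x j = 1} = k - 2 * r"
      using sum_cube_eq[of x n] by (auto simp: Ls_def L_def)
    then show "p \<in> two_one_sets n k r"
      using x unfolding p twos_ones_def two_one_sets_def Ls_def twos_def by auto
  next
    fix p assume "p \<in> two_one_sets n k r"
    then obtain S U where p: "p = (S, U)" and S: "S \<subseteq> {..<n}" "card S = r"
      and U: "U \<subseteq> {..<n} - S" "card U = k - 2 * r"
      unfolding two_one_sets_def by auto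
    define x :: "nat \<Rightarrow> nat"
      where "x j = (if j \<in> S then 2 else if j \<in> U then 1 else if j < n then 0 else undefined)" for j
    have x: "x \<in> cube n" "{j. j < n \<and> x j = 2} = S" "{j. j < n \<and> x j = 1} = U"
      using S U unfolding x_def cube_def by (auto simp: PiE_iff extensional_def)
    then have "x \<in> Ls n k r"
      using sum_cube_eq[of x n] S U assms by (simp add: Ls_def L_def twos_def)
    moreover have "twos_ones n x = p"
      unfolding twos_ones_def x(2,3) p ..
    ultimately show "p \<in> twos_ones n ` Ls n k r"
      by blast
  qed
qed

lemma card_Ls:
  assumes "2 * r \<le> k"
  shows "card (Ls n k r) = (n choose r) * ((n - r) choose (k - 2 * r))"
  using bij_betw_same_card[OF bij_betw_Ls_two_one_sets[OF assms]] card_two_one_sets by simp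

lemma Ls_eq_empty:
  assumes "k < 2 * r"
  shows "Ls n k r = {}"
  using sum_cube_eq assms by (force simp: Ls_def L_def)

lemma card_Ls_pos:
  assumes "2 * r \<le> k" and "k \<le> n + r"
  shows "0 < card (Ls n k r)"
  using assms by (simp add: card_Ls)

lemma card_L_twos_in:
  assumes "finite R"
  shows "card {x \<in> L n k. twos n x \<in> R} = (\<Sum>r\<in>R. card (Ls n k r))"
proof -
  have "{x \<in> L n k. twos n x \<in> R} = (\<Union>r\<in>R. Ls n k r)" by (auto simp: Ls_def)
  also have "card \<dots> = (\<Sum>r\<in>R. card (Ls n k r))"
    by (rule card_UN_disjoint[OF assms]) (auto simp: Ls_def intro: finite_subset[OF _ finite_L])
  finally show ?thesis .
qed

lemma twos_le: "twos n x \<le> n"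
  unfolding twos_def using card_mono[of "{..<n}" "{j. j < n \<and> x j = 2}"] by auto

lemma card_L_eq_sum: "card (L n k) = (\<Sum>r\<le>n. card (Ls n k r))"
  using card_L_twos_in[of "{..n}" n k] twos_le by simp

lemma card_Lle_eq_sum: "card (Lle n k (int s)) = (\<Sum>r\<le>s. card (Ls n k r))"
  using card_L_twos_in[of "{..s}" n k] by (simp add: Lle_def)

lemma card_Lle_pred_eq_sum: "card (Lle n k (int s - 1)) = (\<Sum>r<s. card (Ls n k r))"
  using card_L_twos_in[of "{..<s}" n k] by (simp add: Lle_def)

lemma card_Lge_Suc:
  "real (card (Lge n k (int s + 1))) = real (card (L n k)) - real (card (Lle n k (int s)))"
proof -
  have "Lge n k (int s + 1) = L n k - Lle n k (int s)" by (auto simp: Lge_def Lle_def)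
  moreover have "Lle n k (int s) \<subseteq> L n k" by (auto simp: Lle_def)
  ultimately show ?thesis
    by (simp add: card_Diff_subset finite_subset[OF _ finite_L] card_mono[OF finite_L] of_nat_diff)
qed

lemma choose_mult_diff_eq: "(N choose j) * (N - j) = (N choose Suc j) * Suc j"
  using binomial_absorb_comp[of N j] binomial_absorption[of j N] by (simp add: mult.commute)

lemma card_Ls_raise_zero_nat:
  assumes "2 * r \<le> k" and "k \<le> n"
  shows "card (Ls n k r) * (n - k + r) = card (Ls n (Suc k) r) * (Suc k - 2 * r)"
proof -
  have "card (Ls n k r) * (n - k + r)
      = (n choose r) * (((n - r) choose (k - 2 * r)) * ((n - r) - (k - 2 * r)))"
    using assms by (simp add: card_Ls)
  also have "\<dots> = (n choose r) * (((n - r) choose Suc (k - 2 * r)) * Suc (k - 2 * r))"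
    by (simp only: choose_mult_diff_eq)
  also have "\<dots> = card (Ls n (Suc k) r) * (Suc k - 2 * r)"
    using assms by (simp add: card_Ls Suc_diff_le algebra_simps)
  finally show ?thesis .
qed

lemma card_Ls_raise_one_nat:
  assumes "2 * r < k"
  shows "card (Ls n k r) * (k - 2 * r) = Suc r * card (Ls n (Suc k) (Suc r))"
proof -
  obtain j where j: "k - 2 * r = Suc j" using assms by (metis Suc_diff_Suc)
  then have j': "Suc k - 2 * Suc r = j" by simp
  have "card (Ls n k r) * (k - 2 * r) = (n choose r) * (Suc j * ((n - r) choose Suc j))"
    using assms j by (simp add: card_Ls algebra_simps)
  also have "\<dots> = (n choose r) * ((n - r) * ((n - r - 1) choose j))"
    by (simp only: binomial_absorption)
  also have "\<dots> = ((n - r) * (n choose r)) * ((n - Suc r) choose j)"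
    by simp
  also have "\<dots> = (Suc r * (n choose Suc r)) * ((n - Suc r) choose j)"
    by (simp only: binomial_absorb_comp binomial_absorption)
  also have "\<dots> = Suc r * card (Ls n (Suc k) (Suc r))"
    using card_Ls[of "Suc r" "Suc k" n] assms j' by (simp add: algebra_simps)
  finally show ?thesis .
qed

lemma card_Ls_raise_zero:
  assumes "k < n"
  shows "real (card (Ls n k r)) * (real n - real k + real r)
    = real (card (Ls n (Suc k) r)) * (real k + 1 - 2 * real r)"
proof (cases "2 * r \<le> k")
  case True
  have "real (card (Ls n k r)) * real (n - k + r)
      = real (card (Ls n (Suc k) r)) * real (Suc k - 2 * r)"
    using card_Ls_raise_zero_nat[OF True] assms by (metis of_nat_mult less_imp_le)
  then show ?thesis
    using True assms by (simp add: of_nat_diff algebra_simps)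
next
  case False
  then have "real k + 1 - 2 * real r = 0 \<or> Suc k < 2 * r" by linarith
  then show ?thesis using False by (auto simp: Ls_eq_empty)
qed

lemma card_Ls_raise_one:
  "real (card (Ls n k r)) * (real k - 2 * real r)
    = real (Suc r) * real (card (Ls n (Suc k) (Suc r)))"
proof (cases "2 * r < k")
  case True
  then show ?thesis
    using arg_cong[OF card_Ls_raise_one_nat[OF True], of real] by (simp add: algebra_simps)
next
  case False
  then have "real k - 2 * real r = 0 \<or> k < 2 * r" by linarith
  then show ?thesis using False by (auto simp: Ls_eq_empty)
qed

lemma weighted_mean_square_lt:
  fixes \<beta> :: "nat \<Rightarrow> real"
  assumes nonneg: "\<And>r. 0 \<le> \<beta> r" and pos: "0 < \<beta> 0"
    and mean_pos: "0 < (\<Sum>r\<le>n. real r * \<beta> r)"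
  shows "(\<Sum>r\<le>n. real r * \<beta> r)\<^sup>2 < (\<Sum>r\<le>n. \<beta> r) * (\<Sum>r\<le>n. (real r)\<^sup>2 * \<beta> r)"
proof -
  define W where "W = (\<Sum>r\<le>n. \<beta> r)"
  define M where "M = (\<Sum>r\<le>n. real r * \<beta> r)"
  define M2 where "M2 = (\<Sum>r\<le>n. (real r)\<^sup>2 * \<beta> r)"
  have "\<beta> 0 * (real 0 * W - M)\<^sup>2 \<le> (\<Sum>r\<le>n. \<beta> r * (real r * W - M)\<^sup>2)"
    by (rule member_le_sum) (auto simp: nonneg)
  also have "\<dots> = (\<Sum>r\<le>n. W\<^sup>2 * ((real r)\<^sup>2 * \<beta> r)
      - 2 * W * M * (real r * \<beta> r) + M\<^sup>2 * \<beta> r)"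
    by (rule sum.cong) (auto simp: power2_eq_square algebra_simps)
  also have "\<dots> = W\<^sup>2 * M2 - 2 * W * M * M + M\<^sup>2 * W"
    by (simp add: sum.distrib sum_subtractf sum_distrib_left W_def M_def M2_def)
  also have "\<dots> = W * (W * M2 - M\<^sup>2)"
    by (simp add: power2_eq_square algebra_simps)
  finally have "\<beta> 0 * M\<^sup>2 \<le> W * (W * M2 - M\<^sup>2)" by simp
  moreover have "0 < \<beta> 0 * M\<^sup>2" using pos mean_pos unfolding M_def by simp
  moreover have "\<beta> 0 \<le> W"
    unfolding W_def by (rule member_le_sum) (auto simp: nonneg)
  ultimately have "0 < W" "0 < W * (W * M2 - M\<^sup>2)" using pos by linarith+
  then show ?thesis
    unfolding W_def M_def M2_def by (simp add: zero_less_mult_iff)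
qed

text \<open>By the hypotheses, \<open>t = M / W\<close> satisfies \<open>3 t\<^sup>2 - c t + d < 0\<close> with \<open>c = m + 4 x + 2\<close> and
  \<open>d = x (x + 1)\<close>, so it lies strictly between the roots of this quadratic. The point \<open>d / k\<close>,
  \<open>k = 2 m + 3 x + 1\<close>, lies left of the vertex \<open>c / 6\<close> and the quadratic is nonnegative there,
  hence \<open>d / k < t\<close>.\<close>

lemma moment_quadratic_bound:
  fixes m x W M M2 :: real
  assumes m: "1 \<le> m" and x: "0 \<le> x" and W: "0 < W" and CS: "M\<^sup>2 < W * M2"
    and moments: "3 * M2 = (m + 4 * x + 2) * M - x * (x + 1) * W"
  shows "x * (x + 1) * W < (2 * m + 3 * x + 1) * M"
proof (rule ccontr)
  define c where "c = m + 4 * x + 2"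
  define d where "d = x * (x + 1)"
  define k where "k = 2 * m + 3 * x + 1"
  assume "\<not> ?thesis"
  then have H: "0 \<le> d * W - k * M" unfolding d_def k_def by simp
  have "3 * M\<^sup>2 - c * M * W + d * W\<^sup>2 = 3 * (M\<^sup>2 - W * M2)"
    using arg_cong[OF moments, of "\<lambda>t. W * t"] unfolding c_def d_def
    by (simp add: power2_eq_square algebra_simps)
  then have neg: "3 * M\<^sup>2 - c * M * W + d * W\<^sup>2 < 0"
    using CS by simp
  have vertex: "0 \<le> c * k - 6 * d"
  proof -
    have "c * k - 6 * d = 2 * m\<^sup>2 + 11 * m * x + 5 * m + 6 * x\<^sup>2 + 4 * x + 2"
      unfolding c_def k_def d_def by (simp add: power2_eq_square algebra_simps)
    then show ?thesis using m x by simp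
  qed
  have "0 \<le> c * k * W - 3 * k * M - 3 * d * W"
    using H mult_nonneg_nonneg[OF vertex less_imp_le[OF W]] by (simp add: algebra_simps)
  moreover have "0 \<le> 3 * d - c * k + k\<^sup>2"
  proof -
    have "3 * d - c * k + k\<^sup>2 = (m - 1) * (2 * m + x + 1)"
      unfolding c_def k_def d_def by (simp add: power2_eq_square algebra_simps)
    then show ?thesis using m x by simp
  qed
  moreover have "k\<^sup>2 * (3 * M\<^sup>2 - c * M * W + d * W\<^sup>2)
      = (d * W - k * M) * (c * k * W - 3 * k * M - 3 * d * W) + W\<^sup>2 * d * (3 * d - c * k + k\<^sup>2)"
    by (simp add: power2_eq_square algebra_simps)
  moreover have "0 \<le> d" unfolding d_def using x by simp
  ultimately have "0 \<le> k\<^sup>2 * (3 * M\<^sup>2 - c * M * W + d * W\<^sup>2)"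
    using H by simp
  moreover have "0 < k" unfolding k_def using m x by simp
  ultimately show False
    using neg by (simp add: zero_le_mult_iff)
qed

locale trinomial_levels =
  fixes n i :: nat and a b :: "nat \<Rightarrow> real"
  assumes i_pos: "1 \<le> i" and i_less: "i < n"
    and raise_one: "\<And>r. a r * (real i - 2 * real r) = real (Suc r) * b (Suc r)"
    and raise_zero: "\<And>r. a r * (real n - real i + real r) = b r * (real i + 1 - 2 * real r)"
    and a_eq_0: "\<And>r. i < 2 * r \<Longrightarrow> a r = 0"
    and b_pos: "\<And>r. 2 * r \<le> i + 1 \<Longrightarrow> 0 < b r"
begin

lemma b_eq_0:
  assumes "i + 1 < 2 * r"
  shows "b r = 0"
proof -
  have "real (i + 1) < real (2 * r)" using assms by (simp only: of_nat_less_iff)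
  then show ?thesis using raise_zero[of r] a_eq_0[of r] assms by simp
qed

lemma b_nonneg: "0 \<le> b r"
  by (cases "2 * r \<le> i + 1") (auto simp: b_pos b_eq_0 less_imp_le)

definition A :: real where "A = (\<Sum>r\<le>n. a r)"
definition B :: real where "B = (\<Sum>r\<le>n. b r)"

lemma B_pos: "0 < B"
  using member_le_sum[of 0 "{..n}" b] b_nonneg b_pos[of 0] unfolding B_def by fastforce

lemma level_ratio: "real n * A < (real i + 1) * B"
proof -
  define m where "m = real n - real i"
  have m: "1 \<le> m" using i_less unfolding m_def by linarith
  have denom_pos: "0 < m + real r" for r using m by linarith
  \<comment> \<open>\<open>raise_zero\<close> makes \<open>a r\<close> and \<open>b r\<close> proportional to \<open>i + 1 - 2 r\<close> and \<open>m + r\<close>\<close>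
  define \<beta> where "\<beta> r = b r / (m + real r)" for r
  have b_eq: "b r = \<beta> r * (m + real r)" for r
    using denom_pos[of r] unfolding \<beta>_def by simp
  have a_eq: "a r = \<beta> r * (real i + 1 - 2 * real r)" for r
  proof -
    have "a r * (m + real r) = \<beta> r * (real i + 1 - 2 * real r) * (m + real r)"
      using raise_zero[of r] b_eq[of r] unfolding m_def by (simp add: algebra_simps)
    then show ?thesis using denom_pos[of r] by simp
  qed
  have \<beta>_nonneg: "0 \<le> \<beta> r" for r
    unfolding \<beta>_def by (intro divide_nonneg_pos b_nonneg denom_pos)
  define W where "W = (\<Sum>r\<le>n. \<beta> r)"
  define M where "M = (\<Sum>r\<le>n. real r * \<beta> r)"
  define M2 where "M2 = (\<Sum>r\<le>n. (real r)\<^sup>2 * \<beta> r)"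
  have "(\<Sum>r\<le>n. real r * b r) = (\<Sum>r\<le>n. a r * (real i - 2 * real r))"
  proof -
    obtain n' where n': "n = Suc n'" using i_less by (cases n) auto
    have "(\<Sum>r\<le>n. real r * b r) = real 0 * b 0 + (\<Sum>r\<le>n'. real (Suc r) * b (Suc r))"
      unfolding n' by (rule sum.atMost_Suc_shift)
    also have "\<dots> = (\<Sum>r\<le>n'. a r * (real i - 2 * real r))"
      using raise_one by simp
    also have "\<dots> = (\<Sum>r\<le>n. a r * (real i - 2 * real r))"
      using a_eq_0[of n] i_less unfolding n' by simp
    finally show ?thesis .
  qed
  moreover have "(\<Sum>r\<le>n. real r * b r) = m * M + M2"
    by (simp add: b_eq M_def M2_def sum.distrib sum_distrib_left power2_eq_square algebra_simps)
  moreover have "(\<Sum>r\<le>n. a r * (real i - 2 * real r))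
      = real i * (real i + 1) * W - (4 * real i + 2) * M + 4 * M2"
  proof -
    have "(\<Sum>r\<le>n. a r * (real i - 2 * real r)) = (\<Sum>r\<le>n. real i * (real i + 1) * \<beta> r
        - (4 * real i + 2) * (real r * \<beta> r) + 4 * ((real r)\<^sup>2 * \<beta> r))"
      by (rule sum.cong) (auto simp: a_eq power2_eq_square algebra_simps)
    then show ?thesis
      by (simp add: sum.distrib sum_subtractf sum_distrib_left W_def M_def M2_def)
  qed
  ultimately have moments: "3 * M2 = (m + 4 * real i + 2) * M - real i * (real i + 1) * W"
    by (simp add: algebra_simps)
  have "0 < \<beta> 1" using b_pos[of 1] i_pos denom_pos[of 1] unfolding \<beta>_def by simp
  then have "0 < M"
    using member_le_sum[of 1 "{..n}" "\<lambda>r. real r * \<beta> r"] \<beta>_nonneg i_less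
    unfolding M_def by fastforce
  moreover have "0 < \<beta> 0" using b_pos[of 0] denom_pos[of 0] unfolding \<beta>_def by simp
  ultimately have "M\<^sup>2 < W * M2" "0 < W"
    using weighted_mean_square_lt[of \<beta> n] \<beta>_nonneg member_le_sum[of 0 "{..n}" \<beta>]
    unfolding W_def M_def M2_def by fastforce+
  then have bound: "real i * (real i + 1) * W < (2 * m + 3 * real i + 1) * M"
    using moment_quadratic_bound[OF m _ _ _ moments] by simp
  have A_eq: "A = (real i + 1) * W - 2 * M" and B_eq: "B = m * W + M"
    by (simp_all add: A_def B_def a_eq b_eq W_def M_def sum.distrib sum_subtractf
        sum_distrib_left algebra_simps)
  have "(real i + 1) * B - real n * A = (2 * m + 3 * real i + 1) * M - real i * (real i + 1) * W"
    unfolding A_eq B_eq m_def by (simp add: algebra_simps)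
  with bound show ?thesis by linarith
qed

definition F :: "nat \<Rightarrow> real" where "F k = (\<Sum>r\<le>k. a r)"
definition G :: "nat \<Rightarrow> real" where "G k = (\<Sum>r\<le>k. b r)"

definition psi :: "nat \<Rightarrow> real" where
  "psi k = (real n - real k) * (B * F k - A * G k) - B * a k * (real i - 2 * real k)"

text \<open>\<open>Phi\<close> is the inhomogeneous term of the recurrence \<open>psi_Suc\<close>; \<open>Phi k / ((n - k) (n - k + 1))\<close>
  is strictly decreasing, so \<open>Phi\<close> changes sign at most once.\<close>

definition Phi :: "nat \<Rightarrow> real" where
  "Phi k = B * ((real i + 1 - 2 * real k) * (real n - real k + 1) + real k * (real n - real k))
     - (real n - real k) * (real n - real k + 1) * A"

lemma psi_0: "(real n + 1) * psi 0 = b 0 * Phi 0"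
proof -
  have "(real n + 1) * psi 0 - b 0 * Phi 0
      = (real n + 1) * B * (a 0 * (real n - real i) - b 0 * (real i + 1))"
    unfolding psi_def Phi_def F_def G_def by (simp add: algebra_simps)
  then show ?thesis using raise_zero[of 0] by simp
qed

lemma psi_Suc:
  "(real n - real (Suc j) + 1) * psi (Suc j)
    = (real n - real (Suc j)) * psi j + b (Suc j) * Phi (Suc j)"
proof -
  have "(real n - real (Suc j) + 1) * psi (Suc j)
        - ((real n - real (Suc j)) * psi j + b (Suc j) * Phi (Suc j))
      = (real n - real (Suc j) + 1) * B
          * (a (Suc j) * (real n - real i + real (Suc j)) - b (Suc j) * (real i + 1 - 2 * real (Suc j)))
        + (real n - real (Suc j)) * B * (a j * (real i - 2 * real j) - real (Suc j) * b (Suc j))"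
    unfolding psi_def Phi_def F_def G_def by (simp add: algebra_simps)
  then show ?thesis using raise_zero[of "Suc j"] raise_one[of j] by simp
qed

lemma psi_top:
  assumes "i \<le> 2 * t" and "2 * t \<le> i + 1"
  shows "psi t = 0"
proof -
  have "F t = A" unfolding F_def A_def
    by (rule sum.mono_neutral_left) (use assms i_less in \<open>auto intro!: a_eq_0\<close>)
  moreover have "G t = B" unfolding G_def B_def
    by (rule sum.mono_neutral_left) (use assms i_less in \<open>auto intro!: b_eq_0\<close>)
  moreover have "a t * (real i - 2 * real t) = 0"
    using assms a_eq_0[of t] by (cases "i = 2 * t") auto
  ultimately show ?thesis unfolding psi_def by (simp add: mult.assoc)
qed

lemma Phi_0_pos: "0 < Phi 0"
proof -
  have "Phi 0 = (real n + 1) * ((real i + 1) * B - real n * A)"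
    unfolding Phi_def by (simp add: algebra_simps)
  then show ?thesis using level_ratio by simp
qed

lemma Phi_Suc_neg:
  assumes "Suc j < n" and "Phi j \<le> 0"
  shows "Phi (Suc j) < 0"
proof -
  define D where "D k = (real n - real k) * (real n - real k + 1)" for k
  have pos: "0 < real n - real j" "0 < real n - real (Suc j)" using assms(1) by auto
  have "0 < (real n - real j + 1) * (real n - real i) + 2 * real j"
    using pos i_less by (simp add: add_pos_nonneg)
  then have "0 < B * (real n - real j) * ((real n - real j + 1) * (real n - real i) + 2 * real j)"
    using B_pos pos by simp
  moreover have "D j * Phi (Suc j) - D (Suc j) * Phi j
      = - B * (real n - real j) * ((real n - real j + 1) * (real n - real i) + 2 * real j)"
    unfolding D_def Phi_def by (simp add: algebra_simps)
  moreover have "D (Suc j) * Phi j \<le> 0"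
    using pos assms(2) unfolding D_def by (simp add: mult_nonneg_nonpos)
  ultimately have "D j * Phi (Suc j) < 0" by linarith
  moreover have "0 < D j" unfolding D_def using pos by simp
  ultimately show ?thesis by (simp add: mult_less_0_iff)
qed

lemma psi_Suc_pos:
  assumes "Suc j < n" and "0 < psi j" and "0 \<le> Phi (Suc j)"
  shows "0 < psi (Suc j)"
proof -
  have "0 < (real n - real (Suc j) + 1) * psi (Suc j)"
    using psi_Suc[of j] assms mult_nonneg_nonneg[OF b_nonneg assms(3)]
    by (simp add: add_pos_nonneg)
  moreover have "0 < real n - real (Suc j) + 1" using assms(1) by simp
  ultimately show ?thesis by (simp add: zero_less_mult_iff)
qed

lemma psi_pos_of_Suc:
  assumes "2 * Suc j \<le> i + 1" and "Phi (Suc j) < 0" and "0 \<le> psi (Suc j)"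
  shows "0 < psi j"
proof -
  have pos: "0 < real n - real (Suc j)" using assms(1) i_less by simp
  have "b (Suc j) * Phi (Suc j) < 0" using b_pos[OF assms(1)] assms(2) by (simp add: mult_pos_neg)
  moreover have "0 \<le> (real n - real (Suc j) + 1) * psi (Suc j)" using pos assms(3) by simp
  ultimately have "0 < (real n - real (Suc j)) * psi j" using psi_Suc[of j] by linarith
  then show ?thesis using pos by (simp add: zero_less_mult_iff)
qed

lemma psi_pos:
  assumes "2 * s < i"
  shows "0 < psi s"
proof -
  define t where "t = (i + 1) div 2"
  have t: "i \<le> 2 * t" "2 * t \<le> i + 1" unfolding t_def by auto
  have st: "s < t" and tn: "t < n" using assms t i_less by linarith+
  show ?thesis
  proof (cases "\<forall>k\<le>s. 0 \<le> Phi k")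
    case True
    have "0 < psi k" if "k \<le> s" for k
      using that
    proof (induction k)
      case 0
      have "0 < (real n + 1) * psi 0" using psi_0 Phi_0_pos b_pos[of 0] by simp
      then show ?case by (simp add: zero_less_mult_iff add_pos_nonneg)
    next
      case (Suc k)
      have "Suc k < n" "0 \<le> Phi (Suc k)" using Suc.prems True st tn by auto
      moreover have "0 < psi k" using Suc by simp
      ultimately show ?case by (simp add: psi_Suc_pos)
    qed
    then show ?thesis by simp
  next
    case False
    then obtain k where k: "k \<le> s" "Phi k < 0" by (auto simp: not_le)
    have Phi_neg: "Phi j < 0" if "k \<le> j" "j \<le> t" for j
      using that
    proof (induction j rule: dec_induct)
      case base
      then show ?case using k by simp
    next
      case (step m)
      have "Suc m < n" using step.hyps(2) step.prems tn by simp
      with step show ?case by (simp add: Phi_Suc_neg)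
    qed
    have psi_nonneg: "0 \<le> psi j" if "s \<le> j" "j \<le> t" for j
      using that(2)
    proof (induction j rule: inc_induct)
      case base
      then show ?case using psi_top[OF t] by simp
    next
      case (step m)
      have "2 * Suc m \<le> i + 1" using step.hyps(2) t by simp
      moreover have "Phi (Suc m) < 0" using Phi_neg k that(1) step.hyps by simp
      ultimately show ?case using step.IH psi_pos_of_Suc by (simp add: less_imp_le)
    qed
    have "2 * Suc s \<le> i + 1" "Phi (Suc s) < 0" "0 \<le> psi (Suc s)"
      using st t k Phi_neg psi_nonneg by auto
    then show ?thesis by (rule psi_pos_of_Suc)
  qed
qed

end

lemma divide_less_divide_cross:
  fixes x y p q1 q2 :: real
  assumes "0 < p" and "0 < q1" and "0 < q2" and "y * q1 < x * q2"
  shows "y / (p * q2) < x / (p * q1)"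
proof -
  have "y / (p * q2) = (y * q1) / (p * q1 * q2)" using assms by (simp add: field_simps)
  also have "\<dots> < (x * q2) / (p * q1 * q2)" using assms by (intro divide_strict_right_mono) auto
  also have "\<dots> = x / (p * q1)" using assms by (simp add: field_simps)
  finally show ?thesis .
qed

lemma trinomial_levels_card_Ls:
  assumes "1 \<le> i" and "i < n"
  shows "trinomial_levels n i (\<lambda>r. real (card (Ls n i r))) (\<lambda>r. real (card (Ls n (Suc i) r)))"
  by unfold_locales
    (use assms in \<open>auto simp: card_Ls_raise_one card_Ls_raise_zero Ls_eq_empty card_Ls_pos\<close>)

lemma w'_less_w:
  assumes "1 \<le> i" and "i < n" and "2 * s < i"
  shows "w' n i s < w n i s"
proof -
  interpret trinomial_levels n i "\<lambda>r. real (card (Ls n i r))" "\<lambda>r. real (card (Ls n (Suc i) r))"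
    using assms(1,2) by (rule trinomial_levels_card_Ls)
  let ?a = "real (card (Ls n i s))"
  have cards: "real (card (L n i)) = A" "real (card (L n (i + 1))) = B"
    "real (card (Lge n (i + 1) (int s + 1))) = B - G s"
    "real (card (Lge n i (int s + 1))) = A - F s"
    "real (card (Lle n (i + 1) (int s))) = G s"
    "real (card (Lle n i (int s - 1))) = F s - ?a"
    by (simp_all add: A_def B_def F_def G_def card_L_eq_sum card_Lge_Suc card_Lle_eq_sum
        card_Lle_pred_eq_sum lessThan_Suc_atMost[symmetric])
  define X where "X = B * F s - A * G s"
  have w_eq: "w n i s = X / (?a * A * B * (real i - 2 * real s))"
    unfolding w_def cards X_def by (simp add: algebra_simps)
  have w'_eq: "w' n i s = (B * ?a - X) / (?a * A * B * (real n - real i + real s))"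
    unfolding w'_def cards X_def by (simp add: algebra_simps)
  have "B * ?a * (real i - 2 * real s) < (real n - real s) * X"
    using psi_pos[OF assms(3)] unfolding psi_def X_def by linarith
  then have "(B * ?a - X) * (real i - 2 * real s) < X * (real n - real i + real s)"
    by (simp add: algebra_simps)
  moreover have "0 < ?a" using assms by (simp add: card_Ls_pos)
  moreover have "?a \<le> A"
    unfolding A_def using assms by (intro member_le_sum) auto
  ultimately show ?thesis
    unfolding w_eq w'_eq using assms B_pos by (intro divide_less_divide_cross) simp_all
qed

theorem mainTheorem10:
  fixes n i s :: nat
  assumes "n \<ge> 2" and "1 \<le> i" and "i \<le> n - 1" and "real s < real i / 2"
  shows "w' n i s < w n i s"
proof (rule w'_less_w)
  show "1 \<le> i" by fact
  show "i < n" using assms(1,3) by simp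
  show "2 * s < i" using assms(4) by linarith
qed

end
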